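(* Let $\mathcal{A}=\{a_1,\ldots,a_n\}$ be a set of $n$ distinct positive integers and let $\phi:\mathbb{R}^n_{\ge0}\to\mathbb{R}^n_{\ge0}$, $\phi_j(x)=\sum_{i=1}^n x_i^{a_j}$. Then $\phi$ is injective up to permuting coordinates: if $x,y\in\mathbb{R}^n_{\ge0}$ satisfy $\phi(x)=\phi(y)$, then $y$ is obtained from $x$ by a permutation of the coordinates. Equivalently, a vector in $\mathbb{R}^n_{\ge0}$ is determined up to permutation of coordinates by its $p$-norms $\|x\|_p=(\sum_i x_i^p)^{1/p}$ for $p\in\mathcal{A}$. *)

theory Defs
  imports "HOL-Analysis.Analysis"
begin

end

theory Submission
  imports Defs "HOL-Computational_Algebra.Polynomial"
begin

text \<open>
  Let X s and Y s count the coordinates of x and y that are at least s. For every polynomial P,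
  the sum of P (x i) - P 0 equals the integral of P' * X over [0, M], so the hypothesis says that
  X - Y is orthogonal on [0, M] to every polynomial Q spanned by the monomials s ^ (a j - 1).
  The difference of two antitone step functions with values in {0..n} changes sign at most
  n - 1 times. A polynomial with n terms can be made to vanish at any n - 1 given positive points,
  and by Descartes' bound (fewer positive roots, counted with multiplicity, than nonzero terms)
  it then changes sign exactly there. Placing these points at the sign changes of X - Y makes
  Q * (X - Y) of constant sign, so orthogonality forces X = Y: the coordinates of x and y agree
  as multisets.
\<close>

section \<open>Positive roots of polynomials with few terms\<close>

definition nonzero_coeffs :: "'a::zero poly \<Rightarrow> nat set" where
  "nonzero_coeffs p = {k. coeff p k \<noteq> 0}"

lemma finite_nonzero_coeffs [simp]: "finite (nonzero_coeffs p)"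
  unfolding nonzero_coeffs_def
  by (rule finite_subset[of _ "{..degree p}"]) (auto intro: le_degree)

lemma nonzero_coeffs_monom_mult:
  "nonzero_coeffs (monom (1::'a::comm_semiring_1) k * q) = (\<lambda>i. i + k) ` nonzero_coeffs q"
  unfolding nonzero_coeffs_def
proof (rule set_eqI)
  fix i
  show "i \<in> {i. coeff (monom 1 k * q) i \<noteq> 0} \<longleftrightarrow> i \<in> (\<lambda>i. i + k) ` {i. coeff q i \<noteq> 0}"
    by (cases "i < k") (auto simp: coeff_monom_mult image_iff intro!: exI[of _ "i - k"])
qed

lemma nonzero_coeffs_eq_insert_pderiv:
  fixes q :: "'a::{idom,semiring_char_0} poly"
  assumes "coeff q 0 \<noteq> 0"
  shows "nonzero_coeffs q = insert 0 (Suc ` nonzero_coeffs (pderiv q))"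
proof -
  have "Suc i \<in> nonzero_coeffs q \<longleftrightarrow> i \<in> nonzero_coeffs (pderiv q)" for i
    by (simp add: nonzero_coeffs_def coeff_pderiv del: of_nat_Suc)
  moreover have "0 \<in> nonzero_coeffs q" using assms by (simp add: nonzero_coeffs_def)
  ultimately show ?thesis
    by (auto simp: image_iff) (metis not0_implies_Suc)
qed

lemma card_nonzero_coeffs_pderiv:
  fixes q :: "'a::{idom,semiring_char_0} poly"
  assumes "coeff q 0 \<noteq> 0"
  shows "card (nonzero_coeffs q) = Suc (card (nonzero_coeffs (pderiv q)))"
  unfolding nonzero_coeffs_eq_insert_pderiv[OF assms]
  by (simp add: card_image)

lemma monom_mult_decomp:
  fixes p :: "'a::idom poly"
  assumes "p \<noteq> 0"
  obtains k q where "p = monom 1 k * q" "coeff q 0 \<noteq> 0"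
proof -
  obtain q where q: "p = [:-0, 1:] ^ order 0 p * q" "\<not> [:-0, 1:] dvd q"
    using order_decomp[OF assms] by blast
  then have "poly q 0 \<noteq> 0" by (simp add: poly_eq_0_iff_dvd)
  then have "coeff q 0 \<noteq> 0" by (simp add: poly_0_coeff_0)
  with q(1) show ?thesis by (intro that) (simp_all add: monom_altdef)
qed

lemma pderiv_roots_between_roots:
  fixes q :: "real poly"
  assumes "finite A" "\<And>a. a \<in> A \<Longrightarrow> poly q a = 0"
  shows "\<exists>X. finite X \<and> X \<inter> A = {} \<and> card A \<le> card X + 1 \<and>
    (\<forall>\<xi>\<in>X. poly (pderiv q) \<xi> = 0 \<and> (\<exists>u\<in>A. \<exists>v\<in>A. u < \<xi> \<and> \<xi> < v))"
  using assms
proof (induction A rule: finite_linorder_max_induct)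
  case (insert b A)
  show ?case
  proof (cases "A = {}")
    case False
    from insert obtain X where X: "finite X" "X \<inter> A = {}" "card A \<le> card X + 1"
      "\<forall>\<xi>\<in>X. poly (pderiv q) \<xi> = 0 \<and> (\<exists>u\<in>A. \<exists>v\<in>A. u < \<xi> \<and> \<xi> < v)"
      by auto
    define m where "m = Max A"
    have m: "m \<in> A" "m < b" "\<forall>a\<in>A. a \<le> m"
      using False insert.hyps by (auto simp: m_def)
    then obtain \<xi> where \<xi>: "m < \<xi>" "\<xi> < b" "poly q b - poly q m = (b - m) * poly (pderiv q) \<xi>"
      using poly_MVT[of m b q] by blast
    with m insert.prems have "poly (pderiv q) \<xi> = 0" by simp
    moreover have X_below: "\<forall>x\<in>X. x < m" using X(4) m(3) by fastforce
    moreover from X_below \<xi>(1) insert.hyps(2) have "\<xi> \<notin> X" "b \<notin> A" by auto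
    ultimately show ?thesis
      using X \<xi> m insert.hyps(1)
      by (intro exI[of _ "insert \<xi> X"] conjI) auto
  qed (intro exI[of _ "{}"], simp)
qed simp

lemma sum_order_le_sum_order_pderiv:
  fixes q :: "real poly"
  assumes q': "pderiv q \<noteq> 0" and Z: "finite Z" "Z \<subseteq> {a<..}"
  obtains Z' where "finite Z'" "Z' \<subseteq> {a<..}"
    "(\<Sum>z\<in>Z. order z q) \<le> (\<Sum>z\<in>Z'. order z (pderiv q)) + 1"
proof -
  have q: "q \<noteq> 0" using q' by auto
  define Z1 where "Z1 = {z\<in>Z. poly q z = 0}"
  have Z1: "finite Z1" "Z1 \<subseteq> Z" using Z by (auto simp: Z1_def)
  obtain X where X: "finite X" "X \<inter> Z1 = {}" "card Z1 \<le> card X + 1"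
    "\<forall>\<xi>\<in>X. poly (pderiv q) \<xi> = 0 \<and> (\<exists>u\<in>Z1. \<exists>v\<in>Z1. u < \<xi> \<and> \<xi> < v)"
    using pderiv_roots_between_roots[OF Z1(1), of q] by (auto simp: Z1_def)
  have "X \<subseteq> {a<..}" using X(4) Z1(2) Z(2) by fastforce
  moreover have "(\<Sum>z\<in>Z. order z q) \<le> (\<Sum>z\<in>Z1 \<union> X. order z (pderiv q)) + 1"
  proof -
    have "(\<Sum>z\<in>Z. order z q) = (\<Sum>z\<in>Z1. order z q)"
      using Z1 Z(1) by (intro sum.mono_neutral_right) (auto simp: Z1_def order_0I)
    also have "\<dots> = (\<Sum>z\<in>Z1. order z (pderiv q)) + card Z1"
      using q by (simp add: Z1_def order_pderiv sum_Suc)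
    also have "card X \<le> (\<Sum>z\<in>X. order z (pderiv q))"
      using X(4) q' sum_mono[of X "\<lambda>_. 1::nat" "\<lambda>z. order z (pderiv q)"]
      by (simp add: order_root Suc_le_eq)
    then have "(\<Sum>z\<in>Z1. order z (pderiv q)) + card Z1
        \<le> (\<Sum>z\<in>Z1. order z (pderiv q)) + (\<Sum>z\<in>X. order z (pderiv q)) + 1"
      using X(3) by linarith
    also have "\<dots> = (\<Sum>z\<in>Z1 \<union> X. order z (pderiv q)) + 1"
      using X(1,2) Z1(1) by (simp add: sum.union_disjoint Int_commute)
    finally show ?thesis .
  qed
  ultimately show ?thesis using that X(1) Z1(1) Z1(2) Z(2) by blast
qed

theorem sum_order_positive_roots_less_card_nonzero_coeffs:
  fixes p :: "real poly"
  assumes "p \<noteq> 0" "finite Z" "Z \<subseteq> {0<..}"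
  shows "(\<Sum>z\<in>Z. order z p) < card (nonzero_coeffs p)"
  using assms
proof (induction "card (nonzero_coeffs p)" arbitrary: p Z rule: less_induct)
  case less
  obtain k q where p: "p = monom 1 k * q" and q0: "coeff q 0 \<noteq> 0"
    using monom_mult_decomp[OF less.prems(1)] .
  have "q \<noteq> 0" using q0 by auto
  have card_p: "card (nonzero_coeffs p) = card (nonzero_coeffs q)"
    unfolding p nonzero_coeffs_monom_mult by (simp add: card_image)
  have "order z p = order z q" if "z \<in> Z" for z
  proof -
    have "order z (monom 1 k) = 0"
      by (intro order_0I) (use that less.prems(3) in \<open>auto simp: poly_monom\<close>)
    then show ?thesis using less.prems(1) unfolding p by (simp add: order_mult)
  qed
  then have sum_p: "(\<Sum>z\<in>Z. order z p) = (\<Sum>z\<in>Z. order z q)" by simp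
  have card_q: "card (nonzero_coeffs q) = Suc (card (nonzero_coeffs (pderiv q)))"
    using card_nonzero_coeffs_pderiv[OF q0] .
  show ?case
  proof (cases "pderiv q = 0")
    case True
    then have "poly q z \<noteq> 0" for z
      using q0 by (auto simp: pderiv_eq_0_iff elim!: degree_eq_zeroE)
    then show ?thesis using sum_p card_p card_q by (simp add: order_0I)
  next
    case False
    obtain Z' where Z': "finite Z'" "Z' \<subseteq> {0<..}"
      "(\<Sum>z\<in>Z. order z q) \<le> (\<Sum>z\<in>Z'. order z (pderiv q)) + 1"
      using sum_order_le_sum_order_pderiv[OF False less.prems(2,3)] .
    have "(\<Sum>z\<in>Z'. order z (pderiv q)) < card (nonzero_coeffs (pderiv q))"
      using less.hyps[of "pderiv q" Z'] False Z'(1,2) card_p card_q by simp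
    then show ?thesis using sum_p card_p card_q Z'(3) by simp
  qed
qed

lemma prod_linear_factors_dvd:
  fixes p :: "'a::idom poly"
  assumes "finite Z" "\<And>z. z \<in> Z \<Longrightarrow> poly p z = 0"
  shows "(\<Prod>z\<in>Z. [:-z, 1:]) dvd p"
  using assms
proof (induction Z rule: finite_induct)
  case (insert z Z)
  then obtain r where r: "p = (\<Prod>w\<in>Z. [:-w, 1:]) * r" by blast
  have "poly (\<Prod>w\<in>Z. [:-w, 1:]) z \<noteq> 0"
    using insert.hyps by (simp add: poly_prod)
  with r insert.prems[of z] have "poly r z = 0" by simp
  then obtain r' where "r = [:-z, 1:] * r'" by (auto simp: poly_eq_0_iff_dvd)
  with r have "p = ([:-z, 1:] * (\<Prod>w\<in>Z. [:-w, 1:])) * r'" by (simp only: mult_ac)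
  then show ?case unfolding prod.insert[OF insert.hyps] by (rule dvdI)
qed simp

lemma sign_prod_diff:
  fixes s :: "'a::linordered_idom"
  assumes "finite Z" "s \<notin> Z"
  shows "0 < (-1) ^ card {z\<in>Z. s < z} * (\<Prod>z\<in>Z. s - z)"
  using assms
proof (induction Z rule: finite_induct)
  case (insert z Z)
  then have IH: "0 < (-1) ^ card {z\<in>Z. s < z} * (\<Prod>z\<in>Z. s - z)" by simp
  show ?case
  proof (cases "s < z")
    case True
    then have "{w\<in>insert z Z. s < w} = insert z {w\<in>Z. s < w}" by auto
    then have "card {w\<in>insert z Z. s < w} = Suc (card {w\<in>Z. s < w})"
      using insert.hyps by simp
    with True IH insert.hyps show ?thesis by (simp add: mult_ac mult_neg_pos)
  next
    case False
    with insert.prems have "z < s" by auto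
    then have "{w\<in>insert z Z. s < w} = {w\<in>Z. s < w}" by auto
    with \<open>z < s\<close> IH insert.hyps show ?thesis by (simp add: mult_ac)
  qed
qed simp

lemma poly_sign_constant_on_positive:
  fixes p :: "real poly"
  assumes "\<And>s. 0 < s \<Longrightarrow> poly p s \<noteq> 0"
  obtains \<rho> where "\<rho> = 1 \<or> \<rho> = -1" "\<And>s. 0 < s \<Longrightarrow> 0 < \<rho> * poly p s"
proof -
  have same_sign: "0 < poly p 1 * poly p s" if "0 < s" for s
  proof (rule ccontr)
    assume "\<not> 0 < poly p 1 * poly p s"
    with assms that have neg: "poly p 1 * poly p s < 0"
      by (metis linorder_neqE_linordered_idom mult_eq_0_iff zero_less_one)
    consider "s < 1" | "s = 1" | "1 < s" by linarith
    then show False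
    proof cases
      case 1
      then obtain t where "s < t" "poly p t = 0"
        using poly_IVT[of s 1 p] neg by (auto simp: mult.commute)
      then show False using assms that by auto
    next
      case 3
      then obtain t where "1 < t" "poly p t = 0" using poly_IVT[of 1 s p] neg by auto
      then show False using assms by auto
    qed (use neg in \<open>simp add: mult_less_0_iff\<close>)
  qed
  show ?thesis
    by (rule that[of "if 0 < poly p 1 then 1 else -1"])
      (use same_sign in \<open>auto simp: zero_less_mult_iff\<close>)
qed

lemma sign_poly_alternates_at_roots:
  fixes p :: "real poly"
  assumes p: "p \<noteq> 0" and Z: "finite Z" "Z \<subseteq> {0<..}"
    and sparse: "card (nonzero_coeffs p) \<le> Suc (card Z)"
    and roots: "\<And>z. z \<in> Z \<Longrightarrow> poly p z = 0"
  obtains \<rho> where "\<rho> = 1 \<or> \<rho> = -1"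
    "\<And>s. 0 < s \<Longrightarrow> s \<notin> Z \<Longrightarrow> 0 < \<rho> * (-1) ^ card {z\<in>Z. s < z} * poly p s"
proof -
  define T where "T = (\<Prod>z\<in>Z. [:-z, 1:])"
  obtain r where pTr: "p = T * r"
    using prod_linear_factors_dvd[OF Z(1) roots] unfolding T_def by blast
  \<comment> \<open>A positive root of the cofactor r would give p more positive roots than Descartes' bound allows.\<close>
  have "poly r s \<noteq> 0" if s: "0 < s" for s
  proof
    assume "poly r s = 0"
    then have "1 \<le> order s r" using p pTr by (simp add: order_root Suc_le_eq)
    also have "\<dots> \<le> (\<Sum>z\<in>insert s Z. order z r)" using Z(1) by (intro member_le_sum) auto
    finally have r_roots: "1 \<le> (\<Sum>z\<in>insert s Z. order z r)" .
    have "poly T z = 0" if "z \<in> Z" for z using that Z(1) by (simp add: T_def poly_prod)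
    then have "card Z \<le> (\<Sum>z\<in>Z. order z T)"
      using p pTr sum_mono[of Z "\<lambda>_. 1::nat" "\<lambda>z. order z T"] by (simp add: order_root Suc_le_eq)
    also have "\<dots> \<le> (\<Sum>z\<in>insert s Z. order z T)" using Z(1) by (intro sum_mono2) auto
    finally have "Suc (card Z) \<le> (\<Sum>z\<in>insert s Z. order z p)"
      using r_roots p unfolding pTr by (simp add: order_mult sum.distrib)
    moreover have "(\<Sum>z\<in>insert s Z. order z p) < card (nonzero_coeffs p)"
      using sum_order_positive_roots_less_card_nonzero_coeffs[OF p] Z s by simp
    ultimately show False using sparse by simp
  qed
  then obtain \<rho> where \<rho>: "\<rho> = 1 \<or> \<rho> = -1" "\<And>s. 0 < s \<Longrightarrow> 0 < \<rho> * poly r s"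
    using poly_sign_constant_on_positive by blast
  have "0 < \<rho> * (-1) ^ card {z\<in>Z. s < z} * poly p s" if "0 < s" "s \<notin> Z" for s
  proof -
    have "0 < (-1) ^ card {z\<in>Z. s < z} * poly T s"
      using sign_prod_diff[OF Z(1) \<open>s \<notin> Z\<close>] Z(1) by (simp add: T_def poly_prod)
    with \<rho>(2)[OF \<open>0 < s\<close>] have "0 < ((-1) ^ card {z\<in>Z. s < z} * poly T s) * (\<rho> * poly r s)"
      by simp
    then show ?thesis unfolding pTr by (simp add: mult_ac)
  qed
  with \<rho>(1) show ?thesis using that by blast
qed

section \<open>Polynomials spanned by prescribed monomials\<close>

definition sparse_poly :: "('n::finite \<Rightarrow> nat) \<Rightarrow> ('n \<Rightarrow> 'a::comm_semiring_1) \<Rightarrow> 'a poly" where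
  "sparse_poly b c = (\<Sum>j\<in>UNIV. monom (c j) (b j))"

lemma poly_sparse_poly: "poly (sparse_poly b c) s = (\<Sum>j\<in>UNIV. c j * s ^ b j)"
  by (simp add: sparse_poly_def poly_sum poly_monom)

lemma coeff_sparse_poly: "coeff (sparse_poly b c) k = (\<Sum>j | b j = k. c j)"
  unfolding sparse_poly_def coeff_sum coeff_monom
  by (rule sum.inter_filter[symmetric, where A = UNIV, simplified]) simp

lemma coeff_sparse_poly_inj:
  assumes "inj b"
  shows "coeff (sparse_poly b c) (b j) = c j"
proof -
  have "{i. b i = b j} = {j}" using assms by (auto dest: injD)
  then show ?thesis by (simp add: coeff_sparse_poly)
qed

lemma sparse_poly_eq_0_iff:
  assumes "inj b"
  shows "sparse_poly b c = 0 \<longleftrightarrow> (\<forall>j. c j = 0)"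
proof
  assume "sparse_poly b c = 0"
  then show "\<forall>j. c j = 0" using coeff_sparse_poly_inj[OF assms, of c] by simp
qed (simp add: sparse_poly_def)

lemma card_nonzero_coeffs_sparse_poly:
  "card (nonzero_coeffs (sparse_poly b (c :: 'n::finite \<Rightarrow> 'a::comm_semiring_1))) \<le> CARD('n)"
proof -
  have "nonzero_coeffs (sparse_poly b c) \<subseteq> range b"
  proof
    fix k assume "k \<in> nonzero_coeffs (sparse_poly b c)"
    then have "(\<Sum>j | b j = k. c j) \<noteq> 0" by (simp add: nonzero_coeffs_def coeff_sparse_poly)
    then obtain j where "b j = k" by fastforce
    then show "k \<in> range b" by blast
  qed
  then have "card (nonzero_coeffs (sparse_poly b c)) \<le> card (range b)" by (simp add: card_mono)
  also have "\<dots> \<le> CARD('n)" by (rule card_image_le) simp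
  finally show ?thesis .
qed

lemma pderiv_sparse_poly:
  "pderiv (sparse_poly b c) = sparse_poly (\<lambda>j. b j - 1) (\<lambda>j. of_nat (b j) * c j)"
  using higher_pderiv_sum[of 1 "\<lambda>j. monom (c j) (b j)" UNIV]
  by (simp add: sparse_poly_def pderiv_monom)

lemma sparse_poly_vanishing_on:
  fixes b :: "'n::finite \<Rightarrow> nat" and Z :: "real set"
  assumes "inj b" "finite Z" "card Z < CARD('n)"
  obtains c where "sparse_poly b c \<noteq> 0" "\<And>z. z \<in> Z \<Longrightarrow> poly (sparse_poly b c) z = 0"
proof -
  define S :: "(real ^ 'n) set" where "S = (\<lambda>z. \<chi> j. z ^ b j) ` Z"
  have "dim S \<le> card S" by (rule dim_le_card') (simp add: S_def assms)
  also have "card S \<le> card Z" unfolding S_def by (rule card_image_le) fact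
  finally have "dim S < DIM(real ^ 'n)" using assms(3) by simp
  then obtain e :: "real ^ 'n" where e: "e \<noteq> 0" "\<And>v. v \<in> span S \<Longrightarrow> orthogonal e v"
    using orthogonal_to_subspace_exists by blast
  show ?thesis
  proof (rule that[of "\<lambda>j. e $ j"])
    show "sparse_poly b (\<lambda>j. e $ j) \<noteq> 0"
      using e(1) by (simp add: sparse_poly_eq_0_iff[OF \<open>inj b\<close>] vec_eq_iff)
    fix z assume "z \<in> Z"
    then have "orthogonal e (\<chi> j. z ^ b j)" by (intro e(2) span_base) (simp add: S_def)
    then show "poly (sparse_poly b (\<lambda>j. e $ j)) z = 0"
      by (simp add: orthogonal_def inner_vec_def poly_sparse_poly)
  qed
qed

lemma sparse_poly_matching_sign_pattern:
  fixes b :: "'n::finite \<Rightarrow> nat" and W :: "real set"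
  assumes "inj b" "finite W" "W \<subseteq> {0<..M}" "card W < CARD('n)"
  obtains c \<kappa> where "sparse_poly b c \<noteq> 0" "\<kappa> = 1 \<or> \<kappa> = -1"
    "\<And>w. w \<in> W \<Longrightarrow> poly (sparse_poly b c) w = 0"
    "\<And>s. s \<in> {0<..M} \<Longrightarrow> s \<notin> W \<Longrightarrow> 0 < \<kappa> * (-1) ^ card {w\<in>W. s < w} * poly (sparse_poly b c) s"
proof -
  \<comment> \<open>Padding W with points beyond M to n - 1 roots leaves Descartes' bound no room for further
    positive roots, and on (0, M] the padding only contributes the constant sign (-1) ^ card E.\<close>
  obtain E where E: "finite E" "card E = CARD('n) - 1 - card W" "E \<subseteq> {max 0 M<..}"
    using infinite_arbitrarily_large[OF infinite_Ioi] by blast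
  define Z where "Z = W \<union> E"
  have "W \<inter> E = {}" using assms(3) E(3) by fastforce
  then have card_Z: "card Z = CARD('n) - 1" using assms(2,4) E(1,2) by (simp add: Z_def card_Un_disjoint)
  have Z: "finite Z" "Z \<subseteq> {0<..}" using assms(2,3) E(1,3) by (auto simp: Z_def)
  obtain c where c: "sparse_poly b c \<noteq> 0" "\<And>z. z \<in> Z \<Longrightarrow> poly (sparse_poly b c) z = 0"
    using sparse_poly_vanishing_on[OF assms(1) Z(1)] card_Z by auto
  have "card (nonzero_coeffs (sparse_poly b c)) \<le> Suc (card Z)"
    using card_nonzero_coeffs_sparse_poly[of b c] card_Z by simp
  then obtain \<rho> where \<rho>: "\<rho> = 1 \<or> \<rho> = -1"
    "\<And>s. 0 < s \<Longrightarrow> s \<notin> Z \<Longrightarrow> 0 < \<rho> * (-1) ^ card {z\<in>Z. s < z} * poly (sparse_poly b c) s"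
    using sign_poly_alternates_at_roots[OF c(1) Z] c(2) by blast
  show ?thesis
  proof (rule that[of c "\<rho> * (-1) ^ card E"])
    fix s assume s: "s \<in> {0<..M}" "s \<notin> W"
    have "{z\<in>Z. s < z} = {w\<in>W. s < w} \<union> E" using s E(3) by (auto simp: Z_def)
    then have "card {z\<in>Z. s < z} = card {w\<in>W. s < w} + card E"
      using \<open>W \<inter> E = {}\<close> assms(2) E(1) by (simp add: card_Un_disjoint disjoint_iff)
    moreover have "s \<notin> Z" using s E(3) by (auto simp: Z_def)
    ultimately show "0 < \<rho> * (-1) ^ card E * (-1) ^ card {w\<in>W. s < w} * poly (sparse_poly b c) s"
      using \<rho>(2)[of s] s(1) by (simp add: power_add mult_ac)
  next
    show "\<rho> * (-1) ^ card E = 1 \<or> \<rho> * (-1) ^ card E = -1"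
      using \<rho>(1) by (cases "even (card E)") auto
  qed (use c in \<open>auto simp: Z_def\<close>)
qed

section \<open>Tail counting functions\<close>

definition count_ge :: "('n::finite \<Rightarrow> 'a::linorder) \<Rightarrow> 'a \<Rightarrow> nat" where
  "count_ge x s = card {i. s \<le> x i}"

lemma count_ge_le_card:
  fixes x :: "'n::finite \<Rightarrow> 'a::linorder"
  shows "count_ge x s \<le> CARD('n)"
  unfolding count_ge_def by (rule card_mono) auto

lemma count_ge_antimono: "antimono (count_ge x)"
  unfolding count_ge_def by (intro antimonoI card_mono) auto

lemma count_ge_le_0:
  fixes x :: "'n::finite \<Rightarrow> 'a::{linorder,zero}"
  assumes "\<And>i. 0 \<le> x i" "s \<le> 0"
  shows "count_ge x s = CARD('n)"
proof -
  have "s \<le> x i" for i using assms by (meson order.trans)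
  then have "{i. s \<le> x i} = UNIV" by blast
  then show ?thesis by (simp add: count_ge_def)
qed

lemma count_ge_eq_0:
  assumes "\<And>i. x i < s"
  shows "count_ge x s = 0"
  using assms by (simp add: count_ge_def not_le[symmetric])

lemma count_ge_eq_if_no_value_between:
  assumes "s \<le> t" "\<And>i. x i \<notin> {s..<t}"
  shows "count_ge x s = count_ge x t"
proof -
  have "s \<le> x i \<longleftrightarrow> t \<le> x i" for i
    using assms(1) assms(2)[of i] by (meson atLeastLessThan_iff not_le order_trans)
  then show ?thesis by (simp add: count_ge_def)
qed

lemma count_ge_next_value:
  fixes x y :: "'n::finite \<Rightarrow> 'a::linorder"
  assumes "count_ge x s \<noteq> count_ge y s"
  obtains v where "v \<in> range x \<union> range y" "s \<le> v" "\<And>u. u \<in> range x \<union> range y \<Longrightarrow> s \<le> u \<Longrightarrow> v \<le> u"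
    "count_ge x v = count_ge x s" "count_ge y v = count_ge y s"
proof -
  define U where "U = {u \<in> range x \<union> range y. s \<le> u}"
  have "finite U" by (simp add: U_def)
  have "U \<noteq> {}"
  proof
    assume "U = {}"
    then have "{i. s \<le> x i} = {}" "{i. s \<le> y i} = {}" by (auto simp: U_def)
    with assms show False by (simp add: count_ge_def)
  qed
  with \<open>finite U\<close> have v: "Min U \<in> range x \<union> range y" "s \<le> Min U"
    "\<And>u. u \<in> range x \<union> range y \<Longrightarrow> s \<le> u \<Longrightarrow> Min U \<le> u"
    using Min_in[of U] by (auto simp: U_def)
  have "x i \<notin> {s..<Min U}" "y i \<notin> {s..<Min U}" for i
    using v(3)[of "x i"] v(3)[of "y i"] by auto
  then have "count_ge x s = count_ge x (Min U)" "count_ge y s = count_ge y (Min U)"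
    using count_ge_eq_if_no_value_between[OF v(2)] by metis+
  then show ?thesis by (intro that[OF v]) simp_all
qed

lemma count_ge_constant_left:
  fixes x :: "'n::finite \<Rightarrow> real"
  assumes "b < t"
  obtains c where "b \<le> c" "c < t" "\<And>s. s \<in> {c..t} \<Longrightarrow> count_ge x s = count_ge x t"
proof -
  obtain \<delta> where \<delta>: "0 < \<delta>" "\<forall>v\<in>range x. v \<noteq> t \<longrightarrow> \<delta> \<le> dist t v"
    using finite_set_avoid[of "range x" t] by auto
  define c where "c = max b (t - \<delta> / 2)"
  have c: "b \<le> c" "t - \<delta> / 2 \<le> c" "c < t" using assms \<delta>(1) by (auto simp: c_def)
  have "count_ge x s = count_ge x t" if "s \<in> {c..t}" for s
  proof (rule count_ge_eq_if_no_value_between)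
    show s: "s \<le> t" using that by simp
    fix i show "x i \<notin> {s..<t}"
    proof
      assume xi: "x i \<in> {s..<t}"
      then have "s \<le> x i" "x i < t" by auto
      moreover from \<open>x i < t\<close> have "\<delta> \<le> dist t (x i)" using \<delta>(2) by simp
      ultimately show False using \<open>s \<in> {c..t}\<close> c(2) \<delta>(1) by (simp add: dist_real_def)
    qed
  qed
  then show ?thesis using that[OF c(1,3)] by blast
qed

lemma antimono_sign_flip_gap:
  fixes X Y :: "'a::linorder \<Rightarrow> nat" and \<sigma> :: real
  assumes "antimono X" "antimono Y" "b \<le> u"
    and "\<sigma> * (real (X b) - real (Y b)) < 0" "0 < \<sigma> * (real (X u) - real (Y u))"
  shows "X u + Y u + 2 \<le> X b + Y b"
proof -
  have "X u \<le> X b" "Y u \<le> Y b" using assms(1-3) by (auto dest: antimonoD)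
  with assms(4,5) show ?thesis by (auto simp: mult_less_0_iff zero_less_mult_iff)
qed

text \<open>Every sign change of X - Y lowers X + Y by at least 2, which bounds card W.\<close>

lemma antimono_diff_sign_changes:
  fixes X Y :: "'a::linorder \<Rightarrow> nat"
  assumes mono: "antimono X" "antimono Y" and "finite N" and N: "\<And>v. v \<in> N \<Longrightarrow> X v \<noteq> Y v"
  shows "\<exists>W \<epsilon>. W \<subseteq> N \<and> (\<epsilon> = 1 \<or> \<epsilon> = -1) \<and>
    (\<forall>v\<in>N. 0 < \<epsilon> * (-1) ^ card {w\<in>W. v \<le> w} * (real (X v) - real (Y v))) \<and>
    (N \<noteq> {} \<longrightarrow> 2 * card W < X (Min N) + Y (Min N))"
  using \<open>finite N\<close> N
proof (induction N rule: finite_linorder_min_induct)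
  case (insert b A)
  define D where "D v = real (X v) - real (Y v)" for v
  have "D b \<noteq> 0" using insert.prems by (simp add: D_def)
  show ?case
  proof (cases "A = {}")
    case True
    show ?thesis
      using \<open>D b \<noteq> 0\<close> insert.prems True
      by (intro exI[of _ "{}"] exI[of _ "sgn (D b)"]) (auto simp: D_def sgn_if)
  next
    case False
    from insert obtain W \<epsilon> where W: "W \<subseteq> A" "\<epsilon> = 1 \<or> \<epsilon> = -1"
      "\<forall>v\<in>A. 0 < \<epsilon> * (-1) ^ card {w\<in>W. v \<le> w} * D v" "2 * card W < X (Min A) + Y (Min A)"
      using False by (auto simp: D_def)
    define u where "u = Min A"
    have u: "u \<in> A" "b < u" using False insert.hyps by (auto simp: u_def)
    have Min_b: "Min (insert b A) = b" using insert.hyps False by (auto intro: Min_insert2 less_imp_le)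
    have "finite W" using W(1) insert.hyps(1) by (rule finite_subset)
    have u_le: "u \<le> w" if "w \<in> A" for w using that insert.hyps(1) by (simp add: u_def)
    have W_above: "{w\<in>W. v \<le> w} = W" if "v \<le> u" for v
      using order_trans[OF that u_le] W(1) by blast
    define \<sigma> where "\<sigma> = \<epsilon> * (-1) ^ card W"
    have "0 < \<sigma> * D u" using W(3) u(1) W_above[of u] by (auto simp: \<sigma>_def)
    have mono_b: "X u + Y u \<le> X b + Y b"
      using antimonoD[OF mono(1) less_imp_le[OF u(2)]] antimonoD[OF mono(2) less_imp_le[OF u(2)]]
      by simp
    show ?thesis
    proof (cases "0 < \<sigma> * D b")
      case True
      then show ?thesis
        using W W_above[of b] u mono_b Min_b by (intro exI[of _ W] exI[of _ \<epsilon>]) (auto simp: \<sigma>_def D_def u_def)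
    next
      case False
      have "\<sigma> * D b \<noteq> 0" using \<open>D b \<noteq> 0\<close> W(2) by (auto simp: \<sigma>_def)
      with False have "\<sigma> * D b < 0" by linarith
      then have gap: "X u + Y u + 2 \<le> X b + Y b"
        using antimono_sign_flip_gap[OF mono less_imp_le[OF u(2)]] \<open>0 < \<sigma> * D u\<close>
        by (simp add: D_def)
      have "b \<notin> W" using W(1) insert.hyps(2) by auto
      moreover have "{w\<in>insert b W. b \<le> w} = insert b W"
        using W_above[OF less_imp_le[OF u(2)]] by auto
      ultimately have card_b: "card {w\<in>insert b W. b \<le> w} = Suc (card W)"
        using \<open>finite W\<close> by simp
      have "{w\<in>insert b W. v \<le> w} = {w\<in>W. v \<le> w}" if "v \<in> A" for v
        using that insert.hyps(2) by auto
      then show ?thesis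
        using W \<open>\<sigma> * D b < 0\<close> card_b gap Min_b \<open>b \<notin> W\<close> \<open>finite W\<close>
        by (intro exI[of _ "insert b W"] exI[of _ \<epsilon>]) (auto simp: \<sigma>_def D_def u_def)
    qed
  qed
qed (intro exI[of _ "{}"] exI[of _ 1], simp)

lemma count_ge_diff_sign_changes:
  fixes x y :: "'n::finite \<Rightarrow> 'a::linorder"
  obtains W \<epsilon> where "W \<subseteq> range x \<union> range y" "\<And>w. w \<in> W \<Longrightarrow> count_ge x w \<noteq> count_ge y w"
    "card W < CARD('n)" "\<epsilon> = 1 \<or> \<epsilon> = -1"
    "\<And>s. s \<notin> W \<Longrightarrow> 0 \<le> \<epsilon> * (-1) ^ card {w\<in>W. s < w} * (real (count_ge x s) - real (count_ge y s))"
proof -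
  define V where "V = range x \<union> range y"
  define N where "N = {v\<in>V. count_ge x v \<noteq> count_ge y v}"
  have "finite V" by (simp add: V_def)
  then have "finite N" by (simp add: N_def)
  moreover have "\<And>v. v \<in> N \<Longrightarrow> count_ge x v \<noteq> count_ge y v" by (simp add: N_def)
  ultimately have "\<exists>W \<epsilon>. W \<subseteq> N \<and> (\<epsilon> = 1 \<or> \<epsilon> = -1) \<and>
    (\<forall>v\<in>N. 0 < \<epsilon> * (-1) ^ card {w\<in>W. v \<le> w} * (real (count_ge x v) - real (count_ge y v))) \<and>
    (N \<noteq> {} \<longrightarrow> 2 * card W < count_ge x (Min N) + count_ge y (Min N))"
    by (rule antimono_diff_sign_changes[OF count_ge_antimono count_ge_antimono])
  then obtain W \<epsilon> where W: "W \<subseteq> N" "\<epsilon> = 1 \<or> \<epsilon> = -1"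
    "\<forall>v\<in>N. 0 < \<epsilon> * (-1) ^ card {w\<in>W. v \<le> w} * (real (count_ge x v) - real (count_ge y v))"
    "N \<noteq> {} \<longrightarrow> 2 * card W < count_ge x (Min N) + count_ge y (Min N)"
    by blast
  have "card W < CARD('n)"
  proof (cases "N = {}")
    case False
    then have "2 * card W < count_ge x (Min N) + count_ge y (Min N)" using W(4) by blast
    then show ?thesis using count_ge_le_card[of x "Min N"] count_ge_le_card[of y "Min N"] by linarith
  qed (use W(1) in simp)
  moreover have "0 \<le> \<epsilon> * (-1) ^ card {w\<in>W. s < w} * (real (count_ge x s) - real (count_ge y s))"
    if "s \<notin> W" for s
  proof (cases "count_ge x s = count_ge y s")
    case False
    obtain v where v: "v \<in> V" "s \<le> v" "\<And>u. u \<in> V \<Longrightarrow> s \<le> u \<Longrightarrow> v \<le> u"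
      and same: "count_ge x v = count_ge x s" "count_ge y v = count_ge y s"
      using count_ge_next_value[OF False] unfolding V_def by blast
    with False have "v \<in> N" by (simp add: N_def)
    have "s < w \<longleftrightarrow> v \<le> w" if "w \<in> W" for w
    proof
      have "w \<in> V" using W(1) that by (auto simp: N_def)
      then show "s < w \<Longrightarrow> v \<le> w" using v(3) by simp
      show "v \<le> w \<Longrightarrow> s < w" using v(2) \<open>s \<notin> W\<close> that by (metis order.trans order.not_eq_order_implies_strict)
    qed
    then have "{w\<in>W. s < w} = {w\<in>W. v \<le> w}" by blast
    moreover have "0 < \<epsilon> * (-1) ^ card {w\<in>W. v \<le> w} * (real (count_ge x v) - real (count_ge y v))"
      using W(3) \<open>v \<in> N\<close> by blast
    ultimately show ?thesis using same by simp
  qed simp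
  ultimately show ?thesis
    by (intro that[of W \<epsilon>]) (use W(1,2) in \<open>auto simp: N_def V_def\<close>)
qed

lemma has_integral_count_ge:
  fixes x :: "'n::finite \<Rightarrow> real"
  assumes x: "\<And>i. 0 \<le> x i" "\<And>i. x i \<le> M"
    and deriv: "\<And>s. (F has_real_derivative f s) (at s)"
  shows "((\<lambda>s. f s * real (count_ge x s)) has_integral (\<Sum>i\<in>UNIV. F (x i) - F 0)) {0..M}"
proof -
  have "((\<lambda>s. if s \<in> {0..x i} then f s else 0) has_integral F (x i) - F 0) {0..M}" for i
  proof -
    have "(f has_integral F (x i) - F 0) {0..x i}"
      using x(1) deriv
      by (intro fundamental_theorem_of_calculus)
        (auto simp: has_real_derivative_iff_has_vector_derivative[symmetric]
          intro: has_field_derivative_at_within)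
    then show ?thesis
      using has_integral_restrict_closed_subinterval[of f _ 0 "x i" 0 M] x(2)[of i] by simp
  qed
  then have "((\<lambda>s. \<Sum>i\<in>UNIV. if s \<in> {0..x i} then f s else 0) has_integral
      (\<Sum>i\<in>UNIV. F (x i) - F 0)) {0..M}"
    by (intro has_integral_sum) auto
  moreover have "(\<Sum>i\<in>UNIV. if s \<in> {0..x i} then f s else 0) = f s * real (count_ge x s)"
    if "s \<in> {0..M}" for s
  proof -
    have "(\<Sum>i\<in>UNIV. if s \<in> {0..x i} then f s else 0) = (\<Sum>i\<in>UNIV. f s * of_bool (s \<le> x i))"
      using that by (intro sum.cong) auto
    also have "\<dots> = f s * real (card {i. s \<le> x i})"
      by (simp add: sum_distrib_left[symmetric])
    finally show ?thesis by (simp add: count_ge_def)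
  qed
  ultimately show ?thesis
    using has_integral_cong[of "{0..M}" "\<lambda>s. \<Sum>i\<in>UNIV. if s \<in> {0..x i} then f s else 0"] by simp
qed

lemma card_fibres_eq_if_count_ge_eq:
  fixes x y :: "'n::finite \<Rightarrow> 'a::linorder"
  assumes "\<And>s. count_ge x s = count_ge y s"
  shows "card {i. x i = v} = card {i. y i = v}"
proof -
  define U where "U = {u \<in> range x \<union> range y. v < u}"
  have "finite U" by (simp add: U_def)
  have count_gt: "card {i. v < z i} = (if U = {} then 0 else count_ge z (Min U))"
    if z: "range z \<subseteq> range x \<union> range y" for z :: "'n \<Rightarrow> 'a"
  proof (cases "U = {}")
    case True
    have "z i \<in> U" if "v < z i" for i using z that unfolding U_def by blast
    with True have "{i. v < z i} = {}" by blast
    with True show ?thesis by simp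
  next
    case False
    with \<open>finite U\<close> have "Min U \<in> U" "\<And>u. u \<in> U \<Longrightarrow> Min U \<le> u" by simp_all
    moreover have "z i \<in> range x \<union> range y" for i using z by blast
    ultimately have "v < z i \<longleftrightarrow> Min U \<le> z i" for i
      unfolding U_def by (metis (mono_tags, lifting) mem_Collect_eq order.strict_trans2)
    then have "{i. v < z i} = {i. Min U \<le> z i}" by blast
    with False show ?thesis by (simp add: count_ge_def)
  qed
  have fibre: "card {i. z i = v} = count_ge z v - card {i. v < z i}" for z :: "'n \<Rightarrow> 'a"
  proof -
    have "{i. z i = v} = {i. v \<le> z i} - {i. v < z i}" by auto
    moreover have "{i. v < z i} \<subseteq> {i. v \<le> z i}" by auto
    ultimately show ?thesis by (simp add: count_ge_def card_Diff_subset)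
  qed
  show ?thesis using fibre[of x] fibre[of y] count_gt[of x] count_gt[of y] assms by simp
qed

lemma exists_permutes_if_card_fibres_eq:
  fixes f g :: "'n::finite \<Rightarrow> 'b"
  assumes "\<And>v. card {i. f i = v} = card {i. g i = v}"
  shows "\<exists>\<sigma>. \<sigma> permutes (UNIV :: 'n set) \<and> (\<forall>i. g i = f (\<sigma> i))"
proof -
  have "\<forall>v. \<exists>h. bij_betw h {i. g i = v} {i. f i = v}"
    using assms by (intro allI finite_same_card_bij) auto
  then obtain H where H: "\<And>v. bij_betw (H v) {i. g i = v} {i. f i = v}" by metis
  define \<sigma> where "\<sigma> i = H (g i) i" for i
  have f_\<sigma>: "f (\<sigma> i) = g i" for i
    using bij_betwE[OF H[of "g i"]] by (auto simp: \<sigma>_def)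
  have "inj \<sigma>"
  proof (rule injI)
    fix i j assume "\<sigma> i = \<sigma> j"
    moreover from this have "g i = g j" using f_\<sigma> by metis
    moreover have "inj_on (H (g i)) {k. g k = g i}" using H bij_betw_def by blast
    ultimately show "i = j" by (auto simp: \<sigma>_def dest: inj_onD)
  qed
  then have "\<sigma> permutes UNIV"
    by (intro bij_imp_permutes) (simp_all add: bij_def finite_UNIV_inj_surj)
  with f_\<sigma> show ?thesis by metis
qed

section \<open>Power sums determine a vector up to permutation\<close>

lemma poly_eq_0_if_nonneg_integral_0:
  fixes f :: "real \<Rightarrow> real" and p :: "real poly"
  assumes f: "(f has_integral 0) {a..b}" "\<And>s. s \<in> {a..b} \<Longrightarrow> 0 \<le> f s"
    and cd: "c < d" "{c..d} \<subseteq> {a..b}" and f_p: "\<And>s. s \<in> {c..d} \<Longrightarrow> f s = poly p s"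
  shows "p = 0"
proof (rule ccontr)
  assume "p \<noteq> 0"
  have "f integrable_on {c..d}"
    using integrable_subinterval_real[OF has_integral_integrable[OF f(1)] cd(2)] .
  then have "integral {c..d} f \<le> integral {a..b} f"
    using f cd(2) has_integral_integrable by (intro integral_subset_le) auto
  also have "\<dots> = 0" using f(1) by (rule integral_unique)
  finally have "integral {c..d} (poly p) \<le> 0"
    using integral_cong[of "{c..d}" f "poly p"] f_p by simp
  moreover have p_nonneg: "0 \<le> poly p s" if "s \<in> {c..d}" for s
    using f(2)[of s] f_p[OF that] cd(2) that by auto
  moreover have cont: "continuous_on {c..d} (poly p)" by (intro continuous_intros)
  moreover have "0 \<le> integral {c..d} (poly p)"
    using integral_nonneg[OF integrable_continuous_real[OF cont] p_nonneg] .
  ultimately have "integral {c..d} (poly p) = 0" by linarith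
  then have "{c..d} \<subseteq> {s. poly p s = 0}"
    using integral_eq_0_iff[OF cont cd(1) p_nonneg] by auto
  then have "finite {c..d}" using poly_roots_finite[OF \<open>p \<noteq> 0\<close>] by (rule finite_subset)
  with infinite_Icc[OF cd(1)] show False by contradiction
qed

lemma count_ge_diff_orthogonal_sparse_poly:
  fixes a :: "'n::finite \<Rightarrow> nat" and x y :: "'n \<Rightarrow> real"
  assumes a_pos: "\<And>j. 0 < a j"
    and x: "\<And>i. 0 \<le> x i" "\<And>i. x i \<le> M" and y: "\<And>i. 0 \<le> y i" "\<And>i. y i \<le> M"
    and sums: "\<And>j. (\<Sum>i\<in>UNIV. x i ^ a j) = (\<Sum>i\<in>UNIV. y i ^ a j)"
  shows "((\<lambda>s. poly (sparse_poly (\<lambda>j. a j - 1) c) s * (real (count_ge x s) - real (count_ge y s)))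
    has_integral 0) {0..M}"
proof -
  define P where "P = sparse_poly a (\<lambda>j. c j / real (a j))"
  have P': "pderiv P = sparse_poly (\<lambda>j. a j - 1) c"
    using a_pos by (simp add: P_def pderiv_sparse_poly)
  have "(\<Sum>i\<in>UNIV. poly P (z i)) = (\<Sum>j\<in>UNIV. c j / real (a j) * (\<Sum>i\<in>UNIV. z i ^ a j))"
    for z :: "'n \<Rightarrow> real"
    unfolding P_def poly_sparse_poly sum_distrib_left by (rule sum.swap)
  then have "(\<Sum>i\<in>UNIV. poly P (x i) - poly P 0) = (\<Sum>i\<in>UNIV. poly P (y i) - poly P 0)"
    using sums by (simp add: sum_subtractf)
  moreover have layer_cake: "((\<lambda>s. poly (pderiv P) s * real (count_ge z s)) has_integral
      (\<Sum>i\<in>UNIV. poly P (z i) - poly P 0)) {0..M}"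
    if "\<And>i. 0 \<le> z i" "\<And>i. z i \<le> M" for z :: "'n \<Rightarrow> real"
    using that by (intro has_integral_count_ge) auto
  ultimately show ?thesis
    using has_integral_diff[OF layer_cake[of x] layer_cake[of y]] x y by (simp add: P' right_diff_distrib)
qed

lemma count_ge_eq_if_nonneg_integral_0:
  fixes x y :: "'n::finite \<Rightarrow> real" and p :: "real poly"
  assumes "p \<noteq> 0"
    and integral: "((\<lambda>s. poly p s * (real (count_ge x s) - real (count_ge y s))) has_integral 0) {0..M}"
    and nonneg: "\<And>s. s \<in> {0..M} \<Longrightarrow> 0 \<le> poly p s * (real (count_ge x s) - real (count_ge y s))"
    and t: "0 < t" "t \<le> M"
  shows "count_ge x t = count_ge y t"
proof (rule ccontr)
  assume ne: "count_ge x t \<noteq> count_ge y t"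
  obtain c1 where c1: "0 \<le> c1" "c1 < t" "\<And>s. s \<in> {c1..t} \<Longrightarrow> count_ge x s = count_ge x t"
    using count_ge_constant_left[OF t(1)] by blast
  obtain c2 where c2: "c1 \<le> c2" "c2 < t" "\<And>s. s \<in> {c2..t} \<Longrightarrow> count_ge y s = count_ge y t"
    using count_ge_constant_left[OF c1(2)] by blast
  define d where "d = real (count_ge x t) - real (count_ge y t)"
  have "poly p s * (real (count_ge x s) - real (count_ge y s)) = poly (smult d p) s"
    if "s \<in> {c2..t}" for s
    using c1(3)[of s] c2(3)[of s] that c2(1) by (simp add: d_def)
  moreover have "{c2..t} \<subseteq> {0..M}" using c1 c2 t by auto
  ultimately have "smult d p = 0"
    using poly_eq_0_if_nonneg_integral_0[OF integral nonneg c2(2)] by blast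
  with ne \<open>p \<noteq> 0\<close> show False by (simp add: d_def)
qed

lemma sparse_poly_sign_matching_count_ge_diff:
  fixes a :: "'n::finite \<Rightarrow> nat" and x y :: "'n \<Rightarrow> real"
  assumes a_inj: "inj a" and a_pos: "\<And>j. 0 < a j"
    and x: "\<And>i. 0 \<le> x i" "\<And>i. x i \<le> M" and y: "\<And>i. 0 \<le> y i" "\<And>i. y i \<le> M"
  obtains c \<kappa> where "sparse_poly (\<lambda>j. a j - 1) c \<noteq> 0" "\<kappa> \<noteq> 0"
    "\<And>s. s \<in> {0..M} \<Longrightarrow>
      0 \<le> \<kappa> * poly (sparse_poly (\<lambda>j. a j - 1) c) s * (real (count_ge x s) - real (count_ge y s))"
proof -
  define D where "D s = real (count_ge x s) - real (count_ge y s)" for s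
  have D_le_0: "D s = 0" if "s \<le> 0" for s
  proof -
    have "count_ge x s = CARD('n)" "count_ge y s = CARD('n)"
      by (rule count_ge_le_0, simp_all add: x(1) y(1) that)+
    then show ?thesis by (simp add: D_def)
  qed
  obtain W \<epsilon> where W: "W \<subseteq> range x \<union> range y" "\<And>w. w \<in> W \<Longrightarrow> count_ge x w \<noteq> count_ge y w"
    "card W < CARD('n)" "\<epsilon> = 1 \<or> \<epsilon> = -1" "\<And>s. s \<notin> W \<Longrightarrow> 0 \<le> \<epsilon> * (-1) ^ card {w\<in>W. s < w} * D s"
    unfolding D_def by (rule count_ge_diff_sign_changes[of x y]) blast
  have "finite W" using W(1) by (rule finite_subset) simp
  have W_pos: "W \<subseteq> {0<..M}"
  proof
    fix w assume "w \<in> W"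
    then have "w \<le> M" using W(1) x(2) y(2) by auto
    moreover have "0 < w"
    proof (rule ccontr)
      assume "\<not> 0 < w"
      then have "D w = 0" by (simp add: D_le_0)
      with W(2)[OF \<open>w \<in> W\<close>] show False by (simp add: D_def)
    qed
    ultimately show "w \<in> {0<..M}" by simp
  qed
  have inj_b: "inj (\<lambda>j. a j - 1)"
  proof (rule injI)
    fix j k assume "a j - 1 = a k - 1"
    then have "a j = a k" using a_pos[of j] a_pos[of k] by simp
    then show "j = k" using a_inj by (simp add: inj_eq)
  qed
  obtain c \<kappa> where Q: "sparse_poly (\<lambda>j. a j - 1) c \<noteq> 0" "\<kappa> = 1 \<or> \<kappa> = -1"
    "\<And>w. w \<in> W \<Longrightarrow> poly (sparse_poly (\<lambda>j. a j - 1) c) w = 0"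
    "\<And>s. s \<in> {0<..M} \<Longrightarrow> s \<notin> W \<Longrightarrow> 0 < \<kappa> * (-1) ^ card {w\<in>W. s < w} * poly (sparse_poly (\<lambda>j. a j - 1) c) s"
    using sparse_poly_matching_sign_pattern[OF inj_b \<open>finite W\<close> W_pos W(3)] by blast
  have nonneg: "0 \<le> \<epsilon> * \<kappa> * poly (sparse_poly (\<lambda>j. a j - 1) c) s * D s" if "s \<in> {0..M}" for s
  proof (cases "s \<in> W \<or> s \<le> 0")
    case True
    then show ?thesis using Q(3) D_le_0[of s] by auto
  next
    case False
    define k where "k = card {w\<in>W. s < w}"
    have "0 \<le> (\<epsilon> * (-1) ^ k * D s) * (\<kappa> * (-1) ^ k * poly (sparse_poly (\<lambda>j. a j - 1) c) s)"
      using W(5)[of s] Q(4)[of s] False that by (simp add: k_def)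
    also have "\<dots> = ((-1) ^ k * (-1) ^ k) * (\<epsilon> * \<kappa> * poly (sparse_poly (\<lambda>j. a j - 1) c) s * D s)"
      by (simp add: mult_ac)
    finally show ?thesis by (simp flip: power_add)
  qed
  have "\<epsilon> * \<kappa> \<noteq> 0" using W(4) Q(2) by auto
  with Q(1) show ?thesis by (rule that) (use nonneg in \<open>simp add: D_def\<close>)
qed

lemma count_ge_eq_if_power_sums_eq:
  fixes a :: "'n::finite \<Rightarrow> nat" and x y :: "'n \<Rightarrow> real"
  assumes a_inj: "inj a" and a_pos: "\<And>j. 0 < a j" and x: "\<And>i. 0 \<le> x i" and y: "\<And>i. 0 \<le> y i"
    and sums: "\<And>j. (\<Sum>i\<in>UNIV. x i ^ a j) = (\<Sum>i\<in>UNIV. y i ^ a j)"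
  shows "count_ge x s = count_ge y s"
proof -
  define M where "M = Max (range x \<union> range y)"
  have xM: "x i \<le> M" "y i \<le> M" for i by (simp_all add: M_def)
  consider "s \<le> 0" | "0 < s" "s \<le> M" | "M < s" by linarith
  then show ?thesis
  proof cases
    case 1
    have "count_ge x s = CARD('n)" by (rule count_ge_le_0) (simp_all add: x 1)
    moreover have "count_ge y s = CARD('n)" by (rule count_ge_le_0) (simp_all add: y 1)
    ultimately show ?thesis by simp
  next
    case 2
    obtain c \<kappa> where Q: "sparse_poly (\<lambda>j. a j - 1) c \<noteq> 0" "\<kappa> \<noteq> 0"
      "\<And>s. s \<in> {0..M} \<Longrightarrow>
        0 \<le> \<kappa> * poly (sparse_poly (\<lambda>j. a j - 1) c) s * (real (count_ge x s) - real (count_ge y s))"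
      by (rule sparse_poly_sign_matching_count_ge_diff[where x = x and y = y and M = M,
            OF a_inj a_pos x xM(1) y xM(2)]) blast
    let ?p = "smult \<kappa> (sparse_poly (\<lambda>j. a j - 1) c)"
    from has_integral_mult_right[OF count_ge_diff_orthogonal_sparse_poly[where x = x and y = y and M = M,
          OF a_pos x xM(1) y xM(2) sums], of \<kappa>]
    have "((\<lambda>s. poly ?p s * (real (count_ge x s) - real (count_ge y s))) has_integral 0) {0..M}"
      by (simp add: mult.assoc)
    moreover have "0 \<le> poly ?p s * (real (count_ge x s) - real (count_ge y s))" if "s \<in> {0..M}" for s
      using Q(3)[OF that] by (simp add: mult.assoc)
    moreover have "?p \<noteq> 0" using Q(1,2) by simp
    ultimately show ?thesis using 2 by (intro count_ge_eq_if_nonneg_integral_0[where p = ?p]) auto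
  next
    case 3
    then have "x i < s" "y i < s" for i using xM[of i] by auto
    then show ?thesis by (simp add: count_ge_eq_0)
  qed
qed

theorem proposition5p1:
  fixes a :: "'n::finite \<Rightarrow> nat" and x y :: "real ^ 'n"
  assumes a_inj: "inj a"
    and a_pos: "\<And>j. a j > 0"
    and x_nonneg: "\<And>i. x $ i \<ge> 0"
    and y_nonneg: "\<And>i. y $ i \<ge> 0"
    and phi_eq: "\<And>j. (\<Sum>i\<in>UNIV. (x $ i) ^ (a j)) = (\<Sum>i\<in>UNIV. (y $ i) ^ (a j))"
  shows "\<exists>\<sigma>. \<sigma> permutes (UNIV :: 'n set) \<and> (\<forall>i. y $ i = x $ (\<sigma> i))"
proof -
  have "count_ge (\<lambda>i. x $ i) s = count_ge (\<lambda>i. y $ i) s" for s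
    using count_ge_eq_if_power_sums_eq[OF a_inj] a_pos x_nonneg y_nonneg phi_eq by blast
  then have "card {i. x $ i = v} = card {i. y $ i = v}" for v
    by (rule card_fibres_eq_if_count_ge_eq)
  then show ?thesis by (rule exists_permutes_if_card_fibres_eq)
qed

end
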